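(* For all constants $\beta < \frac{1}{16}$, $L > 16\beta$ and $C_1 > 1$ there exists a constant $C_2 > 1$ such that the following holds. Let $\delta\in(0,1)$, suppose $n > C_2\log\frac{1}{\delta}$, and let $T = \sigma\sqrt{\frac{n}{2\log\frac{2}{\delta}}}$. Let $x_1,\dots,x_n$ be i.i.d. real samples from a distribution with mean $\mu$ and variance at most $\sigma^2$, and let $\mu_0\in\mathbb{R}$ be a given estimate with $|\mu_0 - \mu|\le C_1\sigma\sqrt{\frac{\log\frac{1}{\delta}}{n}}$. Consider the test that computes \[ B = \frac{1}{n}\sum_{i=1}^n (x_i - \mu_0)^2\mathbb{1}_{|x_i - \mu_0| \le 2\beta T} \] and returns ``INLIER-LIGHT'' if $B \le (1-2L)\sigma^2$ and ``OUTLIER-LIGHT'' otherwise. Then with probability at least $1-\delta$: if the distribution is $(4\beta, 4L)$-inlier-light, the test returns ``INLIER-LIGHT''.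
   Context: For a real-valued distribution $x$ with mean $\mu$ and variance at most $\sigma^2$, and with $T = \sigma\sqrt{\frac{n}{2\log\frac{2}{\delta}}}$: $x$ is $(\beta, L)$-inlier-light if $\mathbb{E}[(x-\mu)^2\mathbb{1}_{|x-\mu|\le\beta T}] < (1-L)\sigma^2$. *)

theory Defs
  imports "HOL-Probability.Probability"
begin

definition thrT :: "real \<Rightarrow> nat \<Rightarrow> real \<Rightarrow> real" where
  "thrT \<sigma> n \<delta> = \<sigma> * sqrt (real n / (2 * ln (2 / \<delta>)))"

definition inlier_light :: "real measure \<Rightarrow> real \<Rightarrow> nat \<Rightarrow> real \<Rightarrow> real \<Rightarrow> real \<Rightarrow> bool" where
  "inlier_light D \<sigma> n \<delta> \<beta> L \<longleftrightarrow>
     (let \<mu> = (\<integral>x. x \<partial>D) in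
      (\<integral>x. (x - \<mu>)\<^sup>2 * indicator {y. \<bar>y - \<mu>\<bar> \<le> \<beta> * thrT \<sigma> n \<delta>} x \<partial>D) < (1 - L) * \<sigma>\<^sup>2)"

definition statB :: "nat \<Rightarrow> real \<Rightarrow> real \<Rightarrow> (nat \<Rightarrow> real) \<Rightarrow> real" where
  "statB n \<mu>0 thr xs = (1 / real n) * (\<Sum>i<n. (xs i - \<mu>0)\<^sup>2 * indicator {y. \<bar>y - \<mu>0\<bar> \<le> thr} (xs i))"

end

theory Submission
  imports Defs
begin

text \<open>
  Let \<open>f\<close> be the square truncated at radius \<open>r = 2\<beta>T\<close> around \<open>\<mu>0\<close>, so that the test statistic is
  the empirical mean of \<open>f\<close>. The choice of \<open>C2\<close> forces \<open>\<bar>\<mu>0 - \<mu>\<bar> \<le> \<beta>\<sigma> \<le> r\<close> and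
  \<open>(\<mu>0 - \<mu>)\<^sup>2 \<le> L\<^sup>3\<sigma>\<^sup>2\<close>. Every point kept by \<open>f\<close> then lies within \<open>2r = 4\<beta>T\<close> of \<open>\<mu>\<close>, and the
  weighted inequality \<open>(u - d)\<^sup>2 \<le> (1 + L) u\<^sup>2 + (1 + 1/L) d\<^sup>2\<close> together with the inlier-light
  hypothesis gives \<open>E f \<le> (1 + L)(1 - 4L)\<sigma>\<^sup>2 + (1 + 1/L) L\<^sup>3\<sigma>\<^sup>2 \<le> (1 - 3L)\<sigma>\<^sup>2\<close>.
  Since \<open>0 \<le> f \<le> r\<^sup>2\<close>, a Chernoff bound with parameter \<open>L/(2r\<^sup>2)\<close> shows that the empirical mean
  exceeds \<open>(1 - 2L)\<sigma>\<^sup>2\<close> with probability at most \<open>(\<delta>/2)^(L\<^sup>2/(8\<beta>\<^sup>2)) \<le> \<delta>/2\<close>.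
\<close>

lemma exp_le_1_plus_linear:
  fixes t x B :: real
  assumes "0 \<le> x" "x \<le> B" "0 \<le> t" "t * B \<le> 1"
  shows "exp (t * x) \<le> 1 + t * (1 + t * B) * x"
proof -
  have "t * x \<le> t * B" using assms by (intro mult_left_mono) auto
  then have "exp (t * x) \<le> 1 + t * x + (t * x)\<^sup>2"
    using assms by (intro exp_bound) auto
  also have "(t * x)\<^sup>2 = (t * t) * (x * x)"
    by (simp add: power2_eq_square algebra_simps)
  also have "\<dots> \<le> (t * t) * (B * x)"
    using assms by (intro mult_left_mono mult_right_mono) auto
  finally show ?thesis by (simp add: algebra_simps)
qed

lemma integral_exp_bounded_nonneg_le:
  fixes f :: "'a \<Rightarrow> real"
  assumes "prob_space D" "f \<in> borel_measurable D" "\<And>x. 0 \<le> f x" "\<And>x. f x \<le> B"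
    and "(\<integral>x. f x \<partial>D) \<le> a" "0 \<le> t" "t * B \<le> 1"
  shows "(\<integral>x. exp (t * f x) \<partial>D) \<le> exp (t * a * (1 + t * B))"
proof -
  interpret prob_space D by fact
  have int_f: "integrable D f"
    by (rule integrable_const_bound[where B = B]) (use assms in auto)
  have int_exp: "integrable D (\<lambda>x. exp (t * f x))"
    by (rule integrable_const_bound[where B = "exp (t * B)"])
       (use assms in \<open>auto intro: mult_left_mono\<close>)
  have B: "0 \<le> B" using assms(3,4) order_trans by blast
  have "(\<integral>x. exp (t * f x) \<partial>D) \<le> (\<integral>x. 1 + t * (1 + t * B) * f x \<partial>D)"
    using int_exp int_f assms(3,4,6,7) by (intro integral_mono exp_le_1_plus_linear) auto
  also have "\<dots> = 1 + t * (1 + t * B) * (\<integral>x. f x \<partial>D)"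
    using int_f by (simp add: prob_space)
  also have "\<dots> \<le> 1 + t * (1 + t * B) * a"
    using assms(5,6) B by (intro add_left_mono mult_left_mono) auto
  also have "\<dots> \<le> exp (t * (1 + t * B) * a)"
    by (rule exp_ge_add_one_self)
  finally show ?thesis by (simp add: ac_simps)
qed

lemma integral_PiM_exp_sum:
  fixes f :: "'a \<Rightarrow> real"
  assumes "prob_space D" "integrable D (\<lambda>x. exp (t * f x))"
  shows "(\<integral>xs. exp (t * (\<Sum>i<n. f (xs i))) \<partial>PiM {..<n} (\<lambda>_. D)) = (\<integral>x. exp (t * f x) \<partial>D) ^ n"
proof -
  interpret product_sigma_finite "\<lambda>_. D"
    using assms(1) by (simp add: product_sigma_finite_def prob_space_imp_sigma_finite)
  have "(\<integral>xs. exp (t * (\<Sum>i<n. f (xs i))) \<partial>PiM {..<n} (\<lambda>_. D))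
      = (\<integral>xs. (\<Prod>i<n. exp (t * f (xs i))) \<partial>PiM {..<n} (\<lambda>_. D))"
    by (simp add: sum_distrib_left exp_sum)
  also have "\<dots> = (\<Prod>i<n. (\<integral>x. exp (t * f x) \<partial>D))"
    using product_integral_prod[of "{..<n}" "\<lambda>_ x. exp (t * f x)"] assms(2) by simp
  finally show ?thesis by simp
qed

lemma Chernoff_PiM_sum_ge:
  fixes f :: "'a \<Rightarrow> real"
  assumes "prob_space D" "f \<in> borel_measurable D" "\<And>x. 0 \<le> f x" "\<And>x. f x \<le> B"
    and "(\<integral>x. f x \<partial>D) \<le> a" "0 < t" "t * B \<le> 1"
  shows "measure (PiM {..<n} (\<lambda>_. D)) {xs \<in> space (PiM {..<n} (\<lambda>_. D)). c \<le> (\<Sum>i<n. f (xs i))}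
    \<le> exp (- t * c + real n * t * a * (1 + t * B))"
proof -
  let ?P = "PiM {..<n} (\<lambda>_. D)"
  let ?S = "\<lambda>xs. exp (t * (\<Sum>i<n. f (xs i)))"
  interpret prob_space D by fact
  have int_exp: "integrable D (\<lambda>x. exp (t * f x))"
    by (rule integrable_const_bound[where B = "exp (t * B)"])
       (use assms in \<open>auto intro: mult_left_mono\<close>)
  have "integral\<^sup>L ?P ?S = (\<integral>x. exp (t * f x) \<partial>D) ^ n"
    by (rule integral_PiM_exp_sum[OF assms(1) int_exp])
  also have "\<dots> \<le> exp (t * a * (1 + t * B)) ^ n"
    using integral_exp_bounded_nonneg_le[OF assms(1-5)] assms(6,7)
    by (intro power_mono) auto
  also have "\<dots> = exp (real n * t * a * (1 + t * B))"
    by (simp add: exp_of_nat_mult[symmetric] algebra_simps)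
  finally have mgf: "integral\<^sup>L ?P ?S \<le> exp (real n * t * a * (1 + t * B))" .
  have "{xs \<in> space ?P. c \<le> (\<Sum>i<n. f (xs i))} = {xs \<in> space ?P. exp (t * c) \<le> ?S xs}"
    using assms(6) by auto
  also have "measure ?P \<dots> \<le> integral\<^sup>L ?P ?S / exp (t * c)"
  proof (rule integral_Markov_inequality_measure[where A = "space ?P"])
    interpret P: prob_space ?P
      using assms(1) by (intro prob_space_PiM) auto
    have "?S xs \<le> exp (t * (real n * B))" for xs
      using sum_mono[of "{..<n}" "\<lambda>i. f (xs i)" "\<lambda>_. B"] assms(4,6) by simp
    then show "integrable ?P ?S"
      using assms(2) by (intro P.integrable_const_bound[where B = "exp (t * (real n * B))"]) auto
  qed auto
  also have "\<dots> \<le> exp (real n * t * a * (1 + t * B)) / exp (t * c)"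
    using mgf by (simp add: divide_right_mono)
  also have "\<dots> = exp (- t * c + real n * t * a * (1 + t * B))"
    by (simp add: exp_diff[symmetric])
  finally show ?thesis .
qed

lemma power2_diff_le_weighted:
  fixes u d \<epsilon> :: real
  assumes "0 < \<epsilon>"
  shows "(u - d)\<^sup>2 \<le> (1 + \<epsilon>) * u\<^sup>2 + (1 + 1 / \<epsilon>) * d\<^sup>2"
proof -
  have "(1 + \<epsilon>) * u\<^sup>2 + (1 + 1 / \<epsilon>) * d\<^sup>2 - (u - d)\<^sup>2 = (\<epsilon> * u + d)\<^sup>2 / \<epsilon>"
    using assms by (simp add: field_simps power2_eq_square)
  moreover have "0 \<le> (\<epsilon> * u + d)\<^sup>2 / \<epsilon>" using assms by simp
  ultimately show ?thesis by linarith
qed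

definition truncated_square :: "real \<Rightarrow> real \<Rightarrow> real \<Rightarrow> real" where
  "truncated_square m r y = (y - m)\<^sup>2 * indicator {z. \<bar>z - m\<bar> \<le> r} y"

lemma truncated_square_nonneg: "0 \<le> truncated_square m r y"
  by (simp add: truncated_square_def)

lemma truncated_square_le: "truncated_square m r y \<le> r\<^sup>2"
proof (cases "\<bar>y - m\<bar> \<le> r")
  case True
  then have "\<bar>y - m\<bar>\<^sup>2 \<le> r\<^sup>2" by (intro power_mono) auto
  with True show ?thesis by (simp add: truncated_square_def)
qed (simp add: truncated_square_def)

lemma borel_measurable_truncated_square [measurable]:
  "truncated_square m r \<in> borel_measurable borel"
  unfolding truncated_square_def by measurable

lemma integrable_truncated_square:
  assumes "finite_measure M" "sets M = sets borel"
  shows "integrable M (truncated_square m r)"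
proof -
  interpret finite_measure M by fact
  show ?thesis
    by (rule integrable_const_bound[where B = "r\<^sup>2"])
       (auto simp: truncated_square_nonneg truncated_square_le measurable_cong_sets[OF assms(2) refl])
qed

lemma truncated_square_shift_le:
  assumes "\<bar>m' - m\<bar> \<le> r" "0 < \<epsilon>"
  shows "truncated_square m' r y \<le> (1 + \<epsilon>) * truncated_square m (2 * r) y + (1 + 1 / \<epsilon>) * (m' - m)\<^sup>2"
proof (cases "\<bar>y - m'\<bar> \<le> r")
  case True
  with assms(1) have "\<bar>y - m\<bar> \<le> 2 * r" by linarith
  with True show ?thesis
    using power2_diff_le_weighted[OF assms(2), of "y - m" "m' - m"]
    by (simp add: truncated_square_def)
next
  case False
  then show ?thesis
    using assms(2) by (simp add: truncated_square_def truncated_square_nonneg)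
qed

lemma truncated_second_moment_shift_le:
  assumes "prob_space D" "sets D = sets borel" "\<bar>m' - m\<bar> \<le> r" "0 < \<epsilon>"
  shows "(\<integral>y. truncated_square m' r y \<partial>D)
    \<le> (1 + \<epsilon>) * (\<integral>y. truncated_square m (2 * r) y \<partial>D) + (1 + 1 / \<epsilon>) * (m' - m)\<^sup>2"
proof -
  interpret prob_space D by fact
  have int: "integrable D (truncated_square c s)" for c s
    by (intro integrable_truncated_square finite_measure_axioms assms(2))
  have "(\<integral>y. truncated_square m' r y \<partial>D)
      \<le> (\<integral>y. (1 + \<epsilon>) * truncated_square m (2 * r) y + (1 + 1 / \<epsilon>) * (m' - m)\<^sup>2 \<partial>D)"
    using truncated_square_shift_le[OF assms(3,4)] int by (intro integral_mono) auto
  also have "\<dots> = (1 + \<epsilon>) * (\<integral>y. truncated_square m (2 * r) y \<partial>D) + (1 + 1 / \<epsilon>) * (m' - m)\<^sup>2"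
    using int by (simp add: prob_space)
  finally show ?thesis .
qed

lemma expectation_truncated_square_le:
  assumes "prob_space D" "sets D = sets borel" "0 < L" "L \<le> 3"
    and "\<bar>m' - m\<bar> \<le> r" "(m' - m)\<^sup>2 \<le> L ^ 3 * \<sigma>\<^sup>2"
    and "(\<integral>y. truncated_square m (2 * r) y \<partial>D) < (1 - 4 * L) * \<sigma>\<^sup>2"
  shows "(\<integral>y. truncated_square m' r y \<partial>D) \<le> (1 - 3 * L) * \<sigma>\<^sup>2"
proof -
  have "(\<integral>y. truncated_square m' r y \<partial>D)
      \<le> (1 + L) * (\<integral>y. truncated_square m (2 * r) y \<partial>D) + (1 + 1 / L) * (m' - m)\<^sup>2"
    by (rule truncated_second_moment_shift_le) (use assms in auto)
  also have "\<dots> \<le> (1 + L) * ((1 - 4 * L) * \<sigma>\<^sup>2) + (1 + 1 / L) * (L ^ 3 * \<sigma>\<^sup>2)"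
    using assms(3,6,7) by (intro add_mono mult_left_mono) auto
  also have "\<dots> = (1 - 3 * L) * \<sigma>\<^sup>2 - L\<^sup>2 * (3 - L) * \<sigma>\<^sup>2"
    using assms(3) by (simp add: field_simps power2_eq_square power3_eq_cube)
  also have "\<dots> \<le> (1 - 3 * L) * \<sigma>\<^sup>2"
    using assms(4) by simp
  finally show ?thesis .
qed

lemma statB_eq_sum_truncated_square:
  "statB n m r xs = (\<Sum>i<n. truncated_square m r (xs i)) / real n"
  by (simp add: statB_def truncated_square_def)

lemma inlier_light_iff_truncated_square:
  "inlier_light D \<sigma> n \<delta> \<beta> L \<longleftrightarrow>
     (\<integral>x. truncated_square (\<integral>y. y \<partial>D) (\<beta> * thrT \<sigma> n \<delta>) x \<partial>D) < (1 - L) * \<sigma>\<^sup>2"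
  by (simp add: inlier_light_def truncated_square_def Let_def)

lemma inlier_light_imp_less_1:
  assumes "inlier_light D \<sigma> n \<delta> \<beta> L"
  shows "L < 1"
proof -
  have "0 \<le> (\<integral>x. truncated_square (\<integral>y. y \<partial>D) (\<beta> * thrT \<sigma> n \<delta>) x \<partial>D)"
    by (simp add: truncated_square_nonneg)
  with assms have "0 < (1 - L) * \<sigma>\<^sup>2"
    unfolding inlier_light_iff_truncated_square by linarith
  then show ?thesis by (simp add: zero_less_mult_iff)
qed

lemma thrT_squared:
  assumes "0 < \<delta>" "\<delta> < 2"
  shows "(thrT \<sigma> n \<delta>)\<^sup>2 = \<sigma>\<^sup>2 * real n / (2 * ln (2 / \<delta>))"
proof -
  have "0 < ln (2 / \<delta>)" using assms by (simp add: ln_gt_zero)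
  then show ?thesis by (simp add: thrT_def power_mult_distrib)
qed

lemma thrT_ge_half:
  assumes "0 < \<delta>" "\<delta> < 1" "0 \<le> \<sigma>" "ln (1 / \<delta>) < real n"
  shows "\<sigma> / 2 \<le> thrT \<sigma> n \<delta>"
proof -
  have l: "0 < ln (1 / \<delta>)" using assms(1,2) by (simp add: ln_div)
  have "ln (2 / \<delta>) = ln 2 + ln (1 / \<delta>)" using assms(1) by (simp add: ln_div)
  moreover have "0 < real n"
    using l assms(4) by linarith
  then have "1 \<le> real n"
    by (cases n) auto
  ultimately have "ln (2 / \<delta>) < 2 * real n"
    using ln_2_less_1 assms(4) by linarith
  then have "sqrt (1 / 4) \<le> sqrt (real n / (2 * ln (2 / \<delta>)))"
    using assms(1,2) by (intro real_sqrt_le_mono) (simp add: field_simps ln_gt_zero)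
  then have "1 / 2 \<le> sqrt (real n / (2 * ln (2 / \<delta>)))"
    by (simp add: real_sqrt_divide)
  then show ?thesis
    using mult_left_mono[OF _ assms(3)] by (fastforce simp: thrT_def)
qed

lemma mean_estimate_sq_le:
  fixes d C1 C2 \<sigma> l b :: real
  assumes "\<bar>d\<bar> \<le> C1 * \<sigma> * sqrt (l / real n)" "0 \<le> l"
    and "0 < b" "C1\<^sup>2 / b \<le> C2" "0 < C2" "C2 * l < real n"
  shows "d\<^sup>2 \<le> b * \<sigma>\<^sup>2"
proof -
  have "0 \<le> C2 * l" using assms(2,5) by simp
  with assms(6) have n: "0 < real n" by linarith
  have "\<bar>d\<bar>\<^sup>2 \<le> (C1 * \<sigma> * sqrt (l / real n))\<^sup>2"
    using assms(1) by (intro power_mono) auto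
  also have "\<dots> = C1\<^sup>2 * (l / real n) * \<sigma>\<^sup>2"
    using assms(2) n by (simp add: power_mult_distrib)
  also have "\<dots> \<le> b * \<sigma>\<^sup>2"
  proof (intro mult_right_mono)
    have "C1\<^sup>2 * l \<le> b * C2 * l"
      using assms(2-4) by (intro mult_right_mono) (simp_all add: pos_divide_le_eq mult.commute)
    also have "\<dots> \<le> b * real n"
      using assms(3,6) by (simp add: mult.assoc)
    finally show "C1\<^sup>2 * (l / real n) \<le> b"
      using n by (simp add: field_simps)
  qed simp
  finally show ?thesis by simp
qed

lemma sum_truncated_square_tail_le:
  fixes D :: "real measure"
  assumes D: "prob_space D" "sets D = sets borel"
    and "0 < \<beta>" "16 * \<beta> < L" "L \<le> 2" "0 < \<sigma>" "0 < \<delta>" "\<delta> < 1" "0 < n"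
    and mean: "(\<integral>y. truncated_square \<mu>0 (2 * \<beta> * thrT \<sigma> n \<delta>) y \<partial>D) \<le> (1 - 3 * L) * \<sigma>\<^sup>2"
  shows "measure (PiM {..<n} (\<lambda>_. D)) {xs \<in> space (PiM {..<n} (\<lambda>_. D)).
           real n * ((1 - 2 * L) * \<sigma>\<^sup>2) \<le> (\<Sum>i<n. truncated_square \<mu>0 (2 * \<beta> * thrT \<sigma> n \<delta>) (xs i))}
         \<le> \<delta> / 2"
proof -
  define K where "K = ln (2 / \<delta>)"
  define B where "B = (2 * \<beta> * thrT \<sigma> n \<delta>)\<^sup>2"
  define t where "t = L / (2 * B)"
  have K: "0 < K" using assms(7,8) by (simp add: K_def ln_gt_zero)
  have B: "B = 2 * \<beta>\<^sup>2 * \<sigma>\<^sup>2 * real n / K"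
    using thrT_squared[of \<delta> \<sigma> n] assms(7,8) by (simp add: B_def K_def power_mult_distrib)
  then have "0 < B" using assms(3,6,9) K by simp
  then have t: "0 < t" "t * B = L / 2" using assms(3,4) by (simp_all add: t_def)
  have "t * real n * \<sigma>\<^sup>2 * (L / 2) = K * (L\<^sup>2 / (8 * \<beta>\<^sup>2))"
    using assms(3,6,9) K by (simp add: t_def B field_simps power2_eq_square)
  moreover have "1 \<le> L\<^sup>2 / (8 * \<beta>\<^sup>2)"
  proof -
    have "(16 * \<beta>)\<^sup>2 \<le> L\<^sup>2" using assms(3,4) by (intro power_mono) auto
    then have "256 * \<beta>\<^sup>2 \<le> L\<^sup>2" by (simp add: power_mult_distrib)
    then have "8 * \<beta>\<^sup>2 \<le> L\<^sup>2" using zero_le_power2[of \<beta>] by linarith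
    then show ?thesis using assms(3) by simp
  qed
  ultimately have exponent: "K \<le> t * real n * \<sigma>\<^sup>2 * (L / 2)"
    using mult_left_mono[of 1 "L\<^sup>2 / (8 * \<beta>\<^sup>2)" K] K by simp
  have "measure (PiM {..<n} (\<lambda>_. D)) {xs \<in> space (PiM {..<n} (\<lambda>_. D)).
          real n * ((1 - 2 * L) * \<sigma>\<^sup>2) \<le> (\<Sum>i<n. truncated_square \<mu>0 (2 * \<beta> * thrT \<sigma> n \<delta>) (xs i))}
      \<le> exp (- t * (real n * ((1 - 2 * L) * \<sigma>\<^sup>2)) + real n * t * ((1 - 3 * L) * \<sigma>\<^sup>2) * (1 + t * B))"
    using t assms(5) D mean
    by (intro Chernoff_PiM_sum_ge)
       (auto simp: truncated_square_nonneg truncated_square_le B_def measurable_cong_sets[OF D(2) refl])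
  also have "\<dots> = exp (- (t * real n * \<sigma>\<^sup>2) * (L / 2 + 3 * L\<^sup>2 / 2))"
    unfolding t(2) by (simp add: algebra_simps power2_eq_square)
  also have "\<dots> \<le> exp (- K)"
  proof -
    have "t * real n * \<sigma>\<^sup>2 * (L / 2) \<le> t * real n * \<sigma>\<^sup>2 * (L / 2 + 3 * L\<^sup>2 / 2)"
      using t(1) by (intro mult_left_mono) auto
    then show ?thesis using exponent by simp
  qed
  also have "\<dots> = \<delta> / 2"
    using assms(7) by (simp add: K_def exp_minus)
  finally show ?thesis .
qed

lemma statB_le_with_high_probability:
  fixes D :: "real measure"
  assumes D: "prob_space D" "sets D = sets borel"
    and "0 < \<beta>" "16 * \<beta> < L" "L \<le> 2" "0 < \<sigma>" "0 < \<delta>" "\<delta> < 1" "0 < n"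
    and mean: "(\<integral>y. truncated_square \<mu>0 (2 * \<beta> * thrT \<sigma> n \<delta>) y \<partial>D) \<le> (1 - 3 * L) * \<sigma>\<^sup>2"
  shows "1 - \<delta> / 2 \<le> measure (PiM {..<n} (\<lambda>_. D))
           {xs \<in> space (PiM {..<n} (\<lambda>_. D)). statB n \<mu>0 (2 * \<beta> * thrT \<sigma> n \<delta>) xs \<le> (1 - 2 * L) * \<sigma>\<^sup>2}"
proof -
  let ?P = "PiM {..<n} (\<lambda>_. D)"
  let ?f = "truncated_square \<mu>0 (2 * \<beta> * thrT \<sigma> n \<delta>)"
  define Bad where "Bad = {xs \<in> space ?P. real n * ((1 - 2 * L) * \<sigma>\<^sup>2) \<le> (\<Sum>i<n. ?f (xs i))}"
  interpret P: prob_space ?P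
    using D(1) by (intro prob_space_PiM) auto
  have [measurable]: "?f \<in> borel_measurable D"
    by (simp add: measurable_cong_sets[OF D(2) refl])
  have "P.prob Bad \<le> \<delta> / 2"
    unfolding Bad_def using assms by (rule sum_truncated_square_tail_le)
  moreover have "space ?P - Bad
      \<subseteq> {xs \<in> space ?P. statB n \<mu>0 (2 * \<beta> * thrT \<sigma> n \<delta>) xs \<le> (1 - 2 * L) * \<sigma>\<^sup>2}"
    using assms(9) by (auto simp: Bad_def statB_eq_sum_truncated_square field_simps)
  then have "P.prob (space ?P - Bad)
      \<le> P.prob {xs \<in> space ?P. statB n \<mu>0 (2 * \<beta> * thrT \<sigma> n \<delta>) xs \<le> (1 - 2 * L) * \<sigma>\<^sup>2}"
    by (intro P.finite_measure_mono) (simp_all add: statB_eq_sum_truncated_square)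
  moreover have "Bad \<in> P.events"
    unfolding Bad_def by measurable
  ultimately show ?thesis
    by (simp add: P.prob_compl)
qed

lemma inlier_light_test_accepts:
  fixes D :: "real measure"
  assumes "0 < \<beta>" "16 * \<beta> < L" "0 < \<delta>" "\<delta> < 1" "0 < \<sigma>"
    and D: "prob_space D" "sets D = sets borel"
    and C2: "C1\<^sup>2 / \<beta>\<^sup>2 \<le> C2" "C1\<^sup>2 / L ^ 3 \<le> C2" "1 \<le> C2" "C2 * ln (1 / \<delta>) < real n"
    and \<mu>0: "\<bar>\<mu>0 - (\<integral>y. y \<partial>D)\<bar> \<le> C1 * \<sigma> * sqrt (ln (1 / \<delta>) / real n)"
    and light: "inlier_light D \<sigma> n \<delta> (4 * \<beta>) (4 * L)"
  shows "1 - \<delta> / 2 \<le> measure (PiM {..<n} (\<lambda>_. D))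
           {xs \<in> space (PiM {..<n} (\<lambda>_. D)). statB n \<mu>0 (2 * \<beta> * thrT \<sigma> n \<delta>) xs \<le> (1 - 2 * L) * \<sigma>\<^sup>2}"
proof -
  define \<mu> where "\<mu> = (\<integral>y. y \<partial>D)"
  define r where "r = 2 * \<beta> * thrT \<sigma> n \<delta>"
  have l: "0 < ln (1 / \<delta>)" using assms(3,4) by (simp add: ln_div)
  moreover have "ln (1 / \<delta>) \<le> C2 * ln (1 / \<delta>)"
    using mult_right_mono[OF C2(3), of "ln (1 / \<delta>)"] l by simp
  ultimately have n: "ln (1 / \<delta>) < real n" "0 < real n"
    using C2(4) by linarith+
  have L: "0 < L" "L < 1 / 4"
    using assms(1,2) inlier_light_imp_less_1[OF light] by auto
  have "(\<mu>0 - \<mu>)\<^sup>2 \<le> \<beta>\<^sup>2 * \<sigma>\<^sup>2" and d_L: "(\<mu>0 - \<mu>)\<^sup>2 \<le> L ^ 3 * \<sigma>\<^sup>2"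
    using \<mu>0 l C2 assms(1) L(1) unfolding \<mu>_def by (intro mean_estimate_sq_le; simp)+
  then have "\<bar>\<mu>0 - \<mu>\<bar> \<le> \<bar>\<beta> * \<sigma>\<bar>"
    unfolding abs_le_square_iff by (simp add: power_mult_distrib)
  then have "\<bar>\<mu>0 - \<mu>\<bar> \<le> \<beta> * \<sigma>"
    using assms(1,5) by simp
  also have "\<dots> \<le> r"
  proof -
    have "\<sigma> / 2 \<le> thrT \<sigma> n \<delta>"
      by (rule thrT_ge_half) (use assms(3-5) n(1) in auto)
    then show ?thesis
      using mult_left_mono[of "\<sigma> / 2" "thrT \<sigma> n \<delta>" \<beta>] assms(1) by (simp add: r_def)
  qed
  moreover have "(\<integral>y. truncated_square \<mu> (2 * r) y \<partial>D) < (1 - 4 * L) * \<sigma>\<^sup>2"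
    using light by (simp add: inlier_light_iff_truncated_square r_def \<mu>_def mult.assoc)
  ultimately have "(\<integral>y. truncated_square \<mu>0 r y \<partial>D) \<le> (1 - 3 * L) * \<sigma>\<^sup>2"
    using D L d_L by (intro expectation_truncated_square_le) auto
  then show ?thesis
    using assms(1-5) D L n(2) unfolding r_def by (intro statB_le_with_high_probability) auto
qed

theorem lemma14:
  fixes \<beta> L C1 :: real
  assumes "0 < \<beta>" "\<beta> < 1/16" "L > 16 * \<beta>" "C1 > 1"
  shows "\<exists>C2 > 1. \<forall>(\<delta>::real) (n::nat) (\<sigma>::real) (D::real measure) (\<mu>0::real).
     0 < \<delta> \<and> \<delta> < 1 \<and> real n > C2 * ln (1 / \<delta>) \<and> 0 < \<sigma> \<and>
     prob_space D \<and> sets D = sets borel \<and> integrable D (\<lambda>x. x\<^sup>2) \<and>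
     (\<integral>x. (x - (\<integral>y. y \<partial>D))\<^sup>2 \<partial>D) \<le> \<sigma>\<^sup>2 \<and>
     \<bar>\<mu>0 - (\<integral>y. y \<partial>D)\<bar> \<le> C1 * \<sigma> * sqrt (ln (1 / \<delta>) / real n) \<and>
     inlier_light D \<sigma> n \<delta> (4 * \<beta>) (4 * L)
     \<longrightarrow> measure (PiM {..<n} (\<lambda>_. D))
           {xs \<in> space (PiM {..<n} (\<lambda>_. D)).
              statB n \<mu>0 (2 * \<beta> * thrT \<sigma> n \<delta>) xs \<le> (1 - 2 * L) * \<sigma>\<^sup>2}
         \<ge> 1 - \<delta>"
proof -
  define C2 where "C2 = C1\<^sup>2 / \<beta>\<^sup>2 + C1\<^sup>2 / L ^ 3 + 2"
  have "0 < L" using assms(1,3) by linarith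
  then have "0 \<le> C1\<^sup>2 / \<beta>\<^sup>2" "0 \<le> C1\<^sup>2 / L ^ 3" by simp_all
  then have C2: "C1\<^sup>2 / \<beta>\<^sup>2 \<le> C2" "C1\<^sup>2 / L ^ 3 \<le> C2" "1 < C2"
    unfolding C2_def by linarith+
  show ?thesis
  proof (intro exI[of _ C2] conjI C2(3) allI impI, elim conjE)
    fix \<delta> \<sigma> \<mu>0 :: real and n :: nat and D :: "real measure"
    assume "0 < \<delta>" "\<delta> < 1" "C2 * ln (1 / \<delta>) < real n" "0 < \<sigma>" "prob_space D" "sets D = sets borel"
      and "\<bar>\<mu>0 - (\<integral>y. y \<partial>D)\<bar> \<le> C1 * \<sigma> * sqrt (ln (1 / \<delta>) / real n)"
      and "inlier_light D \<sigma> n \<delta> (4 * \<beta>) (4 * L)"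
    then have "1 - \<delta> / 2 \<le> measure (PiM {..<n} (\<lambda>_. D))
        {xs \<in> space (PiM {..<n} (\<lambda>_. D)). statB n \<mu>0 (2 * \<beta> * thrT \<sigma> n \<delta>) xs \<le> (1 - 2 * L) * \<sigma>\<^sup>2}"
      using assms(1,3) C2 by (intro inlier_light_test_accepts) auto
    then show "1 - \<delta> \<le> measure (PiM {..<n} (\<lambda>_. D))
        {xs \<in> space (PiM {..<n} (\<lambda>_. D)). statB n \<mu>0 (2 * \<beta> * thrT \<sigma> n \<delta>) xs \<le> (1 - 2 * L) * \<sigma>\<^sup>2}"
      using \<open>0 < \<delta>\<close> by linarith
  qed
qed

end
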